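(* Let $G=G_n\langle t_1,\ldots,t_k\rangle$ be a Toeplitz graph. Then the clique number satisfies $\omega(G)\le k+1$, and equality holds if and only if $t_i=it_1$ for every $i\in[k]$.
   Context: For integers $n\ge 2$, $k\ge 1$ and $1\le t_1<t_2<\cdots<t_k\le n-1$, the Toeplitz graph $G_n\langle t_1,\ldots,t_k\rangle$ is the simple graph with vertex set $[n]=\{1,\ldots,n\}$ in which two distinct vertices $i,j$ are adjacent if and only if $|i-j|\in\{t_1,\ldots,t_k\}$. $\omega(G)$ is the maximum number of vertices of a clique of $G$. *)

theory Defs
  imports Main
begin

definition toeplitz_adj :: "nat \<Rightarrow> (nat \<Rightarrow> nat) \<Rightarrow> nat \<Rightarrow> nat \<Rightarrow> bool" where
  "toeplitz_adj k t i j \<longleftrightarrow> i \<noteq> j \<and> (\<exists>l\<in>{1..k}. (if i \<le> j then j - i else i - j) = t l)"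

definition toeplitz_clique :: "nat \<Rightarrow> nat \<Rightarrow> (nat \<Rightarrow> nat) \<Rightarrow> nat set \<Rightarrow> bool" where
  "toeplitz_clique n k t S \<longleftrightarrow> S \<subseteq> {1..n} \<and>
     (\<forall>i\<in>S. \<forall>j\<in>S. i \<noteq> j \<longrightarrow> toeplitz_adj k t i j)"

definition toeplitz_omega :: "nat \<Rightarrow> nat \<Rightarrow> (nat \<Rightarrow> nat) \<Rightarrow> nat" where
  "toeplitz_omega n k t = Max {card S | S. toeplitz_clique n k t S}"

end

theory Submission
  imports Defs
begin

text \<open>Subtracting the least vertex a of a clique S maps S - {a} injectively into the set
  of distances {t 1, ..., t k}, so |S| \<le> k + 1. If |S| = k + 1 the map is onto, hence
  S = a + {0, t 1, ..., t k} and every difference t j - t i (i < j) is again some t l.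
  Then t j - t (j - 1) \<ge> t 1, and t j - t 1 = t m with m < j, squeeze t j to j * t 1 by
  induction. Conversely, if t i = i * t 1 then {1, 1 + t 1, ..., 1 + k * t 1} is a clique.\<close>

lemma differences_closed_imp_progression:
  fixes u :: "nat \<Rightarrow> nat"
  assumes mono: "strict_mono_on {..k} u" and "u 0 = 0"
    and diff: "\<And>i j. i < j \<Longrightarrow> j \<le> k \<Longrightarrow> u j - u i \<in> u ` {1..k}"
  shows "j \<le> k \<Longrightarrow> u j = j * u 1"
proof (induction j rule: less_induct)
  case (less j)
  have less_iff: "u i < u i' \<longleftrightarrow> i < i'" if "i \<le> k" "i' \<le> k" for i i'
    using strict_mono_on_less[OF mono] that by simp
  show ?case
  proof (cases "j \<le> 1")
    case True
    then show ?thesis using \<open>u 0 = 0\<close> by (cases j) auto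
  next
    case False
    obtain l where l: "l \<in> {1..k}" "u j - u (j - 1) = u l"
      using diff[of "j - 1" j] False less.prems by auto
    have "u 1 \<le> u l"
      using l by (intro strict_mono_on_leD[OF mono]) auto
    moreover have "u (j - 1) = (j - 1) * u 1"
      using less.IH[of "j - 1"] False less.prems by simp
    moreover have "u (j - 1) < u j"
      using less_iff[of "j - 1" j] False less.prems by simp
    ultimately have lower: "j * u 1 \<le> u j"
      using l(2) False by (simp add: diff_mult_distrib)
    obtain m where m: "m \<in> {1..k}" "u j - u 1 = u m"
      using diff[of 1 j] False less.prems by auto
    have "0 < u 1"
      using less_iff[of 0 1] False less.prems \<open>u 0 = 0\<close> by simp
    moreover have "u 1 < u j"
      using less_iff[of 1 j] False less.prems by simp
    ultimately have "m < j"
      using m less_iff[of m j] less.prems by auto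
    then have "u j = (m + 1) * u 1"
      using less.IH[of m] less.prems m \<open>u 1 < u j\<close> by simp
    also have "\<dots> \<le> j * u 1"
      using \<open>m < j\<close> by (intro mult_right_mono) auto
    finally show ?thesis
      using lower by simp
  qed
qed

lemma toeplitz_adj_less_iff:
  "i < j \<Longrightarrow> toeplitz_adj k t i j \<longleftrightarrow> j - i \<in> t ` {1..k}"
  unfolding toeplitz_adj_def by auto

lemma toeplitz_clique_finite: "toeplitz_clique n k t S \<Longrightarrow> finite S"
  unfolding toeplitz_clique_def using finite_subset by blast

lemma toeplitz_clique_shift_Min:
  assumes clique: "toeplitz_clique n k t S" and "S \<noteq> {}"
  shows "inj_on (\<lambda>x. x - Min S) (S - {Min S})"
    and "(\<lambda>x. x - Min S) ` (S - {Min S}) \<subseteq> t ` {1..k}"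
proof -
  have "finite S"
    using clique by (rule toeplitz_clique_finite)
  then have Min: "Min S \<in> S" "\<And>x. x \<in> S \<Longrightarrow> Min S \<le> x"
    using \<open>S \<noteq> {}\<close> by auto
  show "inj_on (\<lambda>x. x - Min S) (S - {Min S})"
    by (rule inj_onI) (use Min in force)
  show "(\<lambda>x. x - Min S) ` (S - {Min S}) \<subseteq> t ` {1..k}"
  proof (rule image_subsetI)
    fix x assume "x \<in> S - {Min S}"
    then have "Min S < x" "toeplitz_adj k t (Min S) x"
      using Min clique unfolding toeplitz_clique_def by (auto simp: le_neq_implies_less)
    then show "x - Min S \<in> t ` {1..k}"
      by (simp add: toeplitz_adj_less_iff)
  qed
qed

lemma card_toeplitz_clique_le:
  assumes "toeplitz_clique n k t S"
  shows "card S \<le> k + 1"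
proof (cases "S = {}")
  case False
  have "card (S - {Min S}) \<le> card (t ` {1..k})"
    using toeplitz_clique_shift_Min[OF assms False] by (intro card_inj_on_le) auto
  also have "\<dots> \<le> k"
    using card_image_le[of "{1..k}" t] by simp
  finally show ?thesis
    using toeplitz_clique_finite[OF assms] False by simp
qed simp

lemma finite_toeplitz_clique_cards: "finite {card S |S. toeplitz_clique n k t S}"
  by (rule finite_subset[of _ "{..k + 1}"]) (auto dest: card_toeplitz_clique_le)

lemma toeplitz_omega_le: "toeplitz_omega n k t \<le> k + 1"
proof -
  have "toeplitz_clique n k t {}"
    unfolding toeplitz_clique_def by simp
  then show ?thesis
    unfolding toeplitz_omega_def using finite_toeplitz_clique_cards
    by (subst Max_le_iff) (auto dest: card_toeplitz_clique_le)
qed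

lemma card_le_toeplitz_omega:
  "toeplitz_clique n k t S \<Longrightarrow> card S \<le> toeplitz_omega n k t"
  unfolding toeplitz_omega_def using finite_toeplitz_clique_cards by (intro Max_ge) auto

lemma toeplitz_omega_attained:
  obtains S where "toeplitz_clique n k t S" "card S = toeplitz_omega n k t"
proof -
  have "toeplitz_clique n k t {}"
    unfolding toeplitz_clique_def by simp
  then have "toeplitz_omega n k t \<in> {card S |S. toeplitz_clique n k t S}"
    unfolding toeplitz_omega_def using finite_toeplitz_clique_cards by (intro Max_in) auto
  then show ?thesis
    using that by auto
qed

lemma toeplitz_clique_progression:
  assumes progression: "\<forall>i\<in>{1..k}. t i = i * t 1" and "0 < t 1" and "1 + k * t 1 \<le> n"
  shows "toeplitz_clique n k t ((\<lambda>i. 1 + i * t 1) ` {..k})"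
  unfolding toeplitz_clique_def
proof (intro conjI ballI impI)
  show "(\<lambda>i. 1 + i * t 1) ` {..k} \<subseteq> {1..n}"
  proof (rule image_subsetI)
    fix i assume "i \<in> {..k}"
    then have "i * t 1 \<le> k * t 1"
      by (simp add: mult_le_mono1)
    then show "1 + i * t 1 \<in> {1..n}"
      using \<open>1 + k * t 1 \<le> n\<close> by (simp only: atLeastAtMost_iff) linarith
  qed
next
  have adj: "toeplitz_adj k t (1 + i * t 1) (1 + j * t 1)" if "i < j" "j \<le> k" for i j
  proof -
    have "j - i \<in> {1..k}"
      using that by auto
    then have "(1 + j * t 1) - (1 + i * t 1) = t (j - i)"
      using progression[rule_format, of "j - i"] by (simp add: diff_mult_distrib)
    moreover have "1 + i * t 1 < 1 + j * t 1"
      using \<open>i < j\<close> \<open>0 < t 1\<close> by simp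
    ultimately show ?thesis
      using \<open>j - i \<in> {1..k}\<close> by (simp add: toeplitz_adj_less_iff)
  qed
  fix x y assume "x \<in> (\<lambda>i. 1 + i * t 1) ` {..k}" "y \<in> (\<lambda>i. 1 + i * t 1) ` {..k}" "x \<noteq> y"
  then obtain i j where ij: "i \<le> k" "j \<le> k" "x = 1 + i * t 1" "y = 1 + j * t 1" "i \<noteq> j"
    by auto
  show "toeplitz_adj k t x y"
  proof (cases "i < j")
    case True
    then show ?thesis using adj ij by simp
  next
    case False
    then have "toeplitz_adj k t y x"
      using adj ij by simp
    then show ?thesis
      unfolding toeplitz_adj_def by auto
  qed
qed

lemma toeplitz_clique_card_Suc_imp_progression:
  assumes mono: "strict_mono_on {1..k} t" and "0 < t 1"
    and clique: "toeplitz_clique n k t S" and "card S = k + 1"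
  shows "\<forall>i\<in>{1..k}. t i = i * t 1"
proof -
  define a where "a = Min S"
  have "S \<noteq> {}" "finite S"
    using \<open>card S = k + 1\<close> toeplitz_clique_finite[OF clique] by auto
  then have a: "a \<in> S" "\<And>x. x \<in> S \<Longrightarrow> a \<le> x"
    unfolding a_def by auto
  note shift = toeplitz_clique_shift_Min[OF clique \<open>S \<noteq> {}\<close>, folded a_def]
  have "(\<lambda>x. x - a) ` (S - {a}) = t ` {1..k}"
  proof (rule card_subset_eq)
    show "card ((\<lambda>x. x - a) ` (S - {a})) = card (t ` {1..k})"
      using card_image[OF shift(1)] card_image[OF strict_mono_on_imp_inj_on[OF mono]]
        \<open>card S = k + 1\<close> \<open>finite S\<close> a(1) by simp
  qed (use shift(2) in auto)
  have t_in_S: "a + t l \<in> S" if "l \<in> {1..k}" for l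
  proof -
    have "t l \<in> (\<lambda>x. x - a) ` (S - {a})"
      using that \<open>(\<lambda>x. x - a) ` (S - {a}) = t ` {1..k}\<close> by simp
    then obtain x where "x \<in> S" "t l = x - a"
      by blast
    then show ?thesis
      using a(2) by simp
  qed
  define u where "u = t(0 := 0)"
  have u_image: "u ` {1..k} = t ` {1..k}"
    unfolding u_def by auto
  have u_in_S: "a + u i \<in> S" if "i \<le> k" for i
    using that a(1) t_in_S by (cases "i = 0") (auto simp: u_def)
  have u_mono: "strict_mono_on {..k} u"
  proof (rule strict_mono_onI)
    fix i j :: nat assume "i \<in> {..k}" "j \<in> {..k}" "i < j"
    then show "u i < u j"
      using strict_mono_onD[OF mono, of i j] \<open>0 < t 1\<close> strict_mono_on_leD[OF mono, of 1 j]
      by (cases "i = 0") (auto simp: u_def)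
  qed
  have u_diff: "u j - u i \<in> u ` {1..k}" if "i < j" "j \<le> k" for i j
  proof -
    have "a + u i < a + u j"
      using strict_mono_onD[OF u_mono] that by simp
    moreover have "toeplitz_adj k t (a + u i) (a + u j)"
      using clique u_in_S[of i] u_in_S[of j] that \<open>a + u i < a + u j\<close>
      unfolding toeplitz_clique_def by auto
    ultimately show ?thesis
      using u_image by (simp add: toeplitz_adj_less_iff)
  qed
  show ?thesis
  proof
    fix i assume "i \<in> {1..k}"
    then have "u i = i * u 1"
      using differences_closed_imp_progression[OF u_mono _ u_diff, of i] by (simp add: u_def)
    then show "t i = i * t 1"
      using \<open>i \<in> {1..k}\<close> by (simp add: u_def)
  qed
qed

theorem theorem2p8:
  fixes n k :: nat and t :: "nat \<Rightarrow> nat"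
  assumes "n \<ge> 2" and "k \<ge> 1"
    and "1 \<le> t 1" and "t k \<le> n - 1"
    and "\<And>i j. 1 \<le> i \<Longrightarrow> i < j \<Longrightarrow> j \<le> k \<Longrightarrow> t i < t j"
  shows "toeplitz_omega n k t \<le> k + 1 \<and>
    (toeplitz_omega n k t = k + 1 \<longleftrightarrow> (\<forall>i\<in>{1..k}. t i = i * t 1))"
proof (intro conjI iffI)
  show "toeplitz_omega n k t \<le> k + 1"
    by (rule toeplitz_omega_le)
next
  assume "toeplitz_omega n k t = k + 1"
  moreover obtain S where "toeplitz_clique n k t S" "card S = toeplitz_omega n k t"
    by (rule toeplitz_omega_attained)
  moreover have "strict_mono_on {1..k} t"
    using assms(5) by (intro strict_mono_onI) auto
  ultimately show "\<forall>i\<in>{1..k}. t i = i * t 1"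
    using toeplitz_clique_card_Suc_imp_progression assms(3) by simp
next
  assume progression: "\<forall>i\<in>{1..k}. t i = i * t 1"
  have "1 + k * t 1 \<le> n"
    using progression[rule_format, of k] assms(1,2,4) by simp
  then have "toeplitz_clique n k t ((\<lambda>i. 1 + i * t 1) ` {..k})"
    using assms(3) by (intro toeplitz_clique_progression[OF progression]) auto
  moreover have "card ((\<lambda>i. 1 + i * t 1) ` {..k}) = k + 1"
    using assms(3) by (subst card_image) (auto intro: inj_onI)
  ultimately show "toeplitz_omega n k t = k + 1"
    using card_le_toeplitz_omega toeplitz_omega_le by (metis le_antisym)
qed

end
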